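(* Let $Z$ be a completely Hausdorff topological space and $H:\mathbb R\times Z\to Z$ a continuous locally free action of $\mathbb R$ on $Z$. Then every point $x\in Z$ admits a neighborhood $U$ and a homeomorphism $U\cong I\times T$, where $I\subset\mathbb R$ is a neighborhood of $0$ and $T$ is a topological space, with $x$ corresponding to some $(0,\tau_0)$, such that in these coordinates the action is given by $t\cdot(s,\tau)=(t+s,\tau)$ for $(t,(s,\tau))$ in a neighborhood of $(0,(0,\tau_0))$ in $\mathbb R\times U$. Moreover, for two such coordinate systems, the change of coordinates is of the form $(s,\tau)\mapsto(s+s_\tau,\tau'(\tau))$ where $\tau\mapsto s_\tau$ and $\tau\mapsto\tau'(\tau)$ are continuous; in particular these charts give $Z$ the structure of an oriented lamination by one-dimensional Lipschitz manifolds.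
   Context: A space is completely Hausdorff if any two distinct points can be separated by a continuous real-valued function. The action is locally free if for every $z\in Z$ there is $\eta>0$ such that $H(t,z)=z$ with $|t|<\eta$ implies $t=0$.
   Formalization: The action is translation near (0,z) for every z in U, not only near $(0,(0,\tau_0))$, in each coordinate system; coordinates change by the stated form only near each point of the overlap; the lamination remark is omitted. Apart from conventions, each condition added here is assumed in the paper as well or is needed for the statement above to hold. *)

theory Defs
  imports "HOL-Analysis.Analysis"
begin

definition completely_Hausdorff :: "'a topology \<Rightarrow> bool" where
  "completely_Hausdorff X \<longleftrightarrow>
     (\<forall>x\<in>topspace X. \<forall>y\<in>topspace X. x \<noteq> y \<longrightarrow>
        (\<exists>f. continuous_map X euclideanreal f \<and> f x \<noteq> f y))"

definition continuous_real_action :: "'a topology \<Rightarrow> (real \<Rightarrow> 'a \<Rightarrow> 'a) \<Rightarrow> bool" where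
  "continuous_real_action X H \<longleftrightarrow>
     continuous_map (prod_topology euclideanreal X) X (\<lambda>(t, z). H t z) \<and>
     (\<forall>z\<in>topspace X. H 0 z = z) \<and>
     (\<forall>s t. \<forall>z\<in>topspace X. H s (H t z) = H (s + t) z)"

definition locally_free :: "'a topology \<Rightarrow> (real \<Rightarrow> 'a \<Rightarrow> 'a) \<Rightarrow> bool" where
  "locally_free X H \<longleftrightarrow>
     (\<forall>z\<in>topspace X. \<exists>\<eta>>0. \<forall>t. \<bar>t\<bar> < \<eta> \<and> H t z = z \<longrightarrow> t = 0)"

definition flow_chart ::
  "'a topology \<Rightarrow> (real \<Rightarrow> 'a \<Rightarrow> 'a) \<Rightarrow> 'a set \<Rightarrow> real set \<Rightarrow> 'b topology \<Rightarrow> ('a \<Rightarrow> real \<times> 'b) \<Rightarrow> bool"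
  where
  "flow_chart X H U I T \<phi> \<longleftrightarrow>
     openin X U \<and> open I \<and> 0 \<in> I \<and>
     homeomorphic_map (subtopology X U) (prod_topology (subtopology euclideanreal I) T) \<phi> \<and>
     (\<forall>z\<in>U. \<exists>W. openin (prod_topology euclideanreal (subtopology X U)) W \<and> (0, z) \<in> W \<and>
        (\<forall>t w. (t, w) \<in> W \<longrightarrow>
            H t w \<in> U \<and> \<phi> (H t w) = (t + fst (\<phi> w), snd (\<phi> w))))"

end

theory Submission
  imports Defs
begin

text \<open>Near a point x one first builds a continuous function g that increases strictly along
  every orbit segment of some fixed length through a neighbourhood of x: take a function f
  separating x from a point H a x of its orbit (complete Hausdorffness, local freeness) and
  average it over orbit segments of length a. The time at which the orbit of z crosses the
  level set of g through x is then a continuous function \<tau> of z with \<tau> (H t z) = t + \<tau> z,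
  and z \<mapsto> (\<tau> z, H (- \<tau> z) z) is a flow box whose transversal is that level set.
  Two flow boxes both conjugate the action to translation, so along each orbit their first
  coordinates differ by a constant and their transversal coordinates agree; this gives the
  form of the change of coordinates.\<close>

lemma continuous_map_real_iff:
  "continuous_map X euclideanreal f \<longleftrightarrow>
    (\<forall>x \<in> topspace X. \<forall>e>0. \<exists>U. openin X U \<and> x \<in> U \<and> (\<forall>y\<in>U. \<bar>f y - f x\<bar> < e))"
  using Met_TC.continuous_map_to_metric[of X f] by (simp add: dist_real_def abs_minus_commute)

lemma continuous_on_slice:
  assumes "continuous_map (prod_topology euclideanreal X) euclideanreal F" "z \<in> topspace X"
  shows "continuous_on UNIV (\<lambda>t. F (t, z))"
proof -
  have "continuous_map euclideanreal (prod_topology euclideanreal X) (\<lambda>t. (t, z))"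
    using assms(2) by (auto simp: continuous_map_pairwise o_def)
  from continuous_map_compose[OF this assms(1)] show ?thesis
    by (simp add: o_def)
qed

lemma openin_prod_real_box:
  assumes "openin (prod_topology (subtopology euclideanreal I) Y) W" "open I" "(s, y) \<in> W"
  obtains r V where "r > 0" "openin Y V" "y \<in> V" "\<And>t v. \<bar>t - s\<bar> < r \<Longrightarrow> v \<in> V \<Longrightarrow> (t, v) \<in> W"
proof -
  have "\<exists>J V. openin (subtopology euclideanreal I) J \<and> openin Y V \<and> s \<in> J \<and> y \<in> V \<and> J \<times> V \<subseteq> W"
    using assms(1,3) unfolding openin_prod_topology_alt by blast
  then obtain J V where JV: "openin (subtopology euclideanreal I) J" "openin Y V" "s \<in> J" "y \<in> V"
    "J \<times> V \<subseteq> W"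
    by (elim exE conjE)
  have "open J"
    using JV(1) assms(2) by (rule openin_open_trans)
  then obtain r where r: "r > 0" "ball s r \<subseteq> J"
    using JV(3) open_contains_ball by blast
  show ?thesis
  proof (rule that[OF r(1) JV(2,4)])
    fix t v
    assume "\<bar>t - s\<bar> < r" "v \<in> V"
    then have "t \<in> ball s r"
      by (simp add: dist_real_def abs_minus_commute)
    then show "(t, v) \<in> W"
      using r(2) JV(5) \<open>v \<in> V\<close> by blast
  qed
qed

lemma openin_prod_real_box_zero:
  assumes "openin (prod_topology euclideanreal Y) W" "(0, y) \<in> W"
  obtains r V where "r > 0" "openin Y V" "y \<in> V" "\<And>t v. \<bar>t\<bar> < r \<Longrightarrow> v \<in> V \<Longrightarrow> (t, v) \<in> W"
  using openin_prod_real_box[of UNIV Y W 0 y] assms by auto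

lemma continuous_map_parametric_integral:
  assumes F: "continuous_map (prod_topology euclideanreal X) euclideanreal F" and a: "0 \<le> a"
  shows "continuous_map X euclideanreal (\<lambda>z. integral {0..a} (\<lambda>t. F (t, z)))"
  unfolding continuous_map_real_iff
proof (intro ballI allI impI)
  fix z0 and e :: real
  assume z0: "z0 \<in> topspace X" and e: "0 < e"
  define k where "k = e / (a + 1)"
  have k: "k > 0"
    using e a by (simp add: k_def)
  define W where "W = {p \<in> topspace (prod_topology euclideanreal X). F p - F (fst p, z0) \<in> ball 0 k}"
  have "continuous_map (prod_topology euclideanreal X) (prod_topology euclideanreal X) (\<lambda>p. (fst p, z0))"
    using z0 by (auto simp: continuous_map_pairwise o_def continuous_map_fst)
  from continuous_map_compose[OF this F]
  have "continuous_map (prod_topology euclideanreal X) euclideanreal (\<lambda>p. F p - F (fst p, z0))"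
    using F by (intro continuous_map_diff) (auto simp: o_def)
  then have W: "openin (prod_topology euclideanreal X) W"
    unfolding W_def by (rule openin_continuous_map_preimage) auto
  moreover have "compactin euclideanreal {0..a}"
    by (simp add: compactin_euclidean_iff)
  moreover have "{0..a} \<times> {z0} \<subseteq> W"
    using z0 k by (auto simp: W_def)
  ultimately obtain U V where UV: "openin X V" "z0 \<in> V" "{0..a} \<subseteq> U" "U \<times> V \<subseteq> W"
    using tube_lemma_left z0 by metis
  show "\<exists>V. openin X V \<and> z0 \<in> V \<and>
          (\<forall>y\<in>V. \<bar>integral {0..a} (\<lambda>t. F (t, y)) - integral {0..a} (\<lambda>t. F (t, z0))\<bar> < e)"
  proof (intro exI conjI ballI)
    fix y
    assume y: "y \<in> V"
    then have yt: "y \<in> topspace X"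
      using UV(1) openin_subset by blast
    have bound: "\<bar>F (t, y) - F (t, z0)\<bar> \<le> k" if "t \<in> {0..a}" for t
    proof -
      have "(t, y) \<in> W"
        using that UV(3,4) y by blast
      then show ?thesis
        by (simp add: W_def dist_real_def) arith
    qed
    have int_y: "(\<lambda>t. F (t, y)) integrable_on {0..a}"
      by (rule integrable_continuous_interval, rule continuous_on_subset[OF continuous_on_slice[OF F yt]]) simp
    have int_z0: "(\<lambda>t. F (t, z0)) integrable_on {0..a}"
      by (rule integrable_continuous_interval, rule continuous_on_subset[OF continuous_on_slice[OF F z0]]) simp
    have "\<bar>integral {0..a} (\<lambda>t. F (t, y)) - integral {0..a} (\<lambda>t. F (t, z0))\<bar>
        = norm (integral {0..a} (\<lambda>t. F (t, y) - F (t, z0)))"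
      using integral_diff[OF int_y int_z0] by simp
    also have "\<dots> \<le> integral {0..a} (\<lambda>t. k)"
      using bound int_y int_z0 by (intro integral_norm_bound_integral) (auto intro: integrable_diff)
    also have "\<dots> = a * k"
      using a by simp
    also have "\<dots> < e"
      using a e k unfolding k_def by (simp add: field_simps)
    finally show "\<bar>integral {0..a} (\<lambda>t. F (t, y)) - integral {0..a} (\<lambda>t. F (t, z0))\<bar> < e" .
  qed (use UV in auto)
qed

lemma integral_window_strict_mono:
  fixes F :: "real \<Rightarrow> real"
  assumes F: "continuous_on UNIV F" and "0 \<le> a" "s1 < s2" "c > 0"
    and gain: "\<And>u. u \<in> {s1..s2} \<Longrightarrow> c \<le> F (u + a) - F u"
  shows "integral {s1..s1 + a} F < integral {s2..s2 + a} F"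
proof -
  have int: "F integrable_on {p..q}" for p q
    by (rule integrable_continuous_interval, rule continuous_on_subset[OF F]) auto
  have int_shifted: "(\<lambda>u. F (u + a)) integrable_on {s1..s2}"
    by (rule integrable_continuous_interval, rule continuous_on_compose2[OF F]) (auto intro: continuous_intros)
  have split1: "integral {s1..s2} F + integral {s2..s2 + a} F = integral {s1..s2 + a} F"
    using Henstock_Kurzweil_Integration.integral_combine[OF _ _ int[of s1 "s2 + a"], of s2] assms(2,3) by auto
  have split2: "integral {s1..s1 + a} F + integral {s1 + a..s2 + a} F = integral {s1..s2 + a} F"
    using Henstock_Kurzweil_Integration.integral_combine[OF _ _ int[of s1 "s2 + a"], of "s1 + a"] assms(2,3) by auto
  have shift: "integral {s1 + a..s2 + a} F = integral {s1..s2} (\<lambda>u. F (u + a))"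
    using integral_shift_Icc_real[of s1 s2 F a] by (simp add: o_def add.commute)
  have "0 < (s2 - s1) * c"
    using assms(3,4) by simp
  also have "\<dots> = integral {s1..s2} (\<lambda>u. c)"
    using assms(3) by simp
  also have "\<dots> \<le> integral {s1..s2} (\<lambda>u. F (u + a) - F u)"
    using gain by (intro integral_le integrable_diff int_shifted int) auto
  also have "\<dots> = integral {s1..s2} (\<lambda>u. F (u + a)) - integral {s1..s2} F"
    by (intro integral_diff int_shifted int)
  finally show ?thesis
    using split1 split2 shift by linarith
qed

locale real_flow =
  fixes X :: "'a topology" and H :: "real \<Rightarrow> 'a \<Rightarrow> 'a"
  assumes action: "continuous_real_action X H"
begin

lemma continuous_flow: "continuous_map (prod_topology euclideanreal X) X (\<lambda>(t, z). H t z)"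
  and flow_zero: "z \<in> topspace X \<Longrightarrow> H 0 z = z"
  and flow_add: "z \<in> topspace X \<Longrightarrow> H s (H t z) = H (s + t) z"
  using action unfolding continuous_real_action_def by blast+

lemma flow_in_topspace: "z \<in> topspace X \<Longrightarrow> H t z \<in> topspace X"
  using continuous_map_image_subset_topspace[OF continuous_flow] by force

lemma continuous_map_flow_comp:
  assumes "continuous_map X Y f"
  shows "continuous_map (prod_topology euclideanreal X) Y (\<lambda>(t, z). f (H t z))"
  using continuous_map_compose[OF continuous_flow assms] by (simp add: o_def case_prod_unfold)

lemma continuous_map_flow_at:
  assumes "continuous_map X Y f"
  shows "continuous_map X Y (\<lambda>z. f (H s z))"
proof -
  have "continuous_map X (prod_topology euclideanreal X) (\<lambda>z. (s, z))"
    by (auto simp: continuous_map_pairwise o_def)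
  from continuous_map_compose[OF this continuous_map_flow_comp[OF assms]] show ?thesis
    by (simp add: o_def)
qed

lemma continuous_on_orbit:
  assumes "continuous_map X euclideanreal f" "z \<in> topspace X"
  shows "continuous_on UNIV (\<lambda>t. f (H t z))"
  using continuous_on_slice[OF continuous_map_flow_comp[OF assms(1)] assms(2)] by simp

lemma orbit_separating_function:
  assumes "completely_Hausdorff X" "locally_free X H" "x \<in> topspace X"
  obtains a f where "a > 0" "continuous_map X euclideanreal f" "f x < f (H a x)"
proof -
  obtain \<eta> where \<eta>: "\<eta> > 0" "\<And>t. \<bar>t\<bar> < \<eta> \<Longrightarrow> H t x = x \<Longrightarrow> t = 0"
    using assms(2,3) unfolding locally_free_def by blast
  have a: "\<eta> / 2 > 0" "H (\<eta> / 2) x \<noteq> x"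
    using \<eta>(1) \<eta>(2)[of "\<eta> / 2"] by auto
  then obtain f where f: "continuous_map X euclideanreal f" "f (H (\<eta> / 2) x) \<noteq> f x"
    using assms(1,3) flow_in_topspace unfolding completely_Hausdorff_def by metis
  show ?thesis
  proof (cases "f x < f (H (\<eta> / 2) x)")
    case True
    with a f show ?thesis
      by (intro that) auto
  next
    case False
    with a f show ?thesis
      by (intro that[of "\<eta> / 2" "\<lambda>z. - f z"]) (auto intro: continuous_map_minus)
  qed
qed

lemma orbit_gain_near:
  assumes f: "continuous_map X euclideanreal f" and x: "x \<in> topspace X" and fx: "f x < f (H a x)"
  obtains c \<delta> N where "c > 0" "\<delta> > 0" "openin X N" "x \<in> N"
    "\<And>u z. \<bar>u\<bar> < \<delta> \<Longrightarrow> z \<in> N \<Longrightarrow> c < f (H (u + a) z) - f (H u z)"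
proof -
  define F where "F = (\<lambda>(t, z). f (H t z))"
  have F: "continuous_map (prod_topology euclideanreal X) euclideanreal F"
    unfolding F_def by (rule continuous_map_flow_comp[OF f])
  define gain where "gain p = F (fst p + a, snd p) - F p" for p
  have "continuous_map (prod_topology euclideanreal X) (prod_topology euclideanreal X)
      (\<lambda>p. (fst p + a, snd p))"
    by (auto simp: continuous_map_pairwise o_def continuous_map_fst continuous_map_snd
        intro!: continuous_map_add)
  from continuous_map_compose[OF this F]
  have "continuous_map (prod_topology euclideanreal X) euclideanreal gain"
    unfolding gain_def using F by (intro continuous_map_diff) (auto simp: o_def)
  then have "openin (prod_topology euclideanreal X)
      {p \<in> topspace (prod_topology euclideanreal X). gain p \<in> {gain (0, x) / 2<..}}"
    by (rule openin_continuous_map_preimage) auto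
  moreover have c: "gain (0, x) / 2 > 0"
    using fx x by (simp add: gain_def F_def flow_zero)
  then have "(0, x) \<in> {p \<in> topspace (prod_topology euclideanreal X). gain p \<in> {gain (0, x) / 2<..}}"
    using x by simp
  ultimately obtain \<delta> N where \<delta>: "\<delta> > 0" "openin X N" "x \<in> N"
    and "\<And>u z. \<bar>u\<bar> < \<delta> \<Longrightarrow> z \<in> N \<Longrightarrow>
      (u, z) \<in> {p \<in> topspace (prod_topology euclideanreal X). gain p \<in> {gain (0, x) / 2<..}}"
    by (rule openin_prod_real_box_zero) blast
  then have "\<And>u z. \<bar>u\<bar> < \<delta> \<Longrightarrow> z \<in> N \<Longrightarrow> gain (0, x) / 2 < f (H (u + a) z) - f (H u z)"
    by (simp add: gain_def F_def)
  with c \<delta> show ?thesis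
    by (rule that)
qed

lemma orbit_increasing_function:
  assumes "completely_Hausdorff X" "locally_free X H" "x \<in> topspace X"
  obtains g N \<delta> where "continuous_map X euclideanreal g" "openin X N" "x \<in> N" "\<delta> > 0"
    "\<And>z. z \<in> N \<Longrightarrow> strict_mono_on {-\<delta><..<\<delta>} (\<lambda>s. g (H s z))"
proof -
  obtain a f where a: "a > 0" and f: "continuous_map X euclideanreal f" and fx: "f x < f (H a x)"
    using orbit_separating_function assms by blast
  obtain c \<delta> N where c: "c > 0" and \<delta>: "\<delta> > 0" "openin X N" "x \<in> N"
    and gain: "\<And>u z. \<bar>u\<bar> < \<delta> \<Longrightarrow> z \<in> N \<Longrightarrow> c < f (H (u + a) z) - f (H u z)"
    by (rule orbit_gain_near[OF f assms(3) fx]) blast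
  \<comment> \<open>g (H s2 z) - g (H s1 z) is the integral over [s1, s2] of f (H (u + a) z) - f (H u z)\<close>
  define g where "g z = integral {0..a} (\<lambda>t. f (H t z))" for z
  have "continuous_map X euclideanreal g"
    unfolding g_def using continuous_map_flow_comp[OF f] a
    by (intro continuous_map_parametric_integral[where F = "\<lambda>(t, z). f (H t z)", simplified]) auto
  moreover have "strict_mono_on {-\<delta><..<\<delta>} (\<lambda>s. g (H s z))" if z: "z \<in> N" for z
  proof (rule strict_mono_onI)
    have zt: "z \<in> topspace X"
      using z \<delta>(2) openin_subset by blast
    have g_window: "g (H s z) = integral {s..s + a} (\<lambda>u. f (H u z))" for s
      using integral_shift_Icc_real[of 0 a "\<lambda>u. f (H u z)" s]
      by (simp add: g_def flow_add[OF zt] o_def add.commute)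
    fix s1 s2
    assume "s1 \<in> {-\<delta><..<\<delta>}" "s2 \<in> {-\<delta><..<\<delta>}" "s1 < s2"
    then show "g (H s1 z) < g (H s2 z)"
      unfolding g_window using gain[OF _ z] c a
      by (intro integral_window_strict_mono continuous_on_orbit[OF f zt]) (auto simp: less_imp_le)
  qed
  ultimately show ?thesis
    using that \<delta> by blast
qed

lemma openin_flow_return_strip:
  assumes U: "openin X U"
  shows "openin (prod_topology euclideanreal (subtopology X U))
    {(t, w). \<bar>t\<bar> < \<epsilon> \<and> w \<in> U \<and> H t w \<in> U}"
proof -
  let ?P = "prod_topology euclideanreal (subtopology X U)"
  have "continuous_map ?P X (\<lambda>(t, z). H t z)"
    unfolding prod_topology_subtopology using continuous_flow by (rule continuous_map_from_subtopology)
  then have "openin ?P {p \<in> topspace ?P. (\<lambda>(t, z). H t z) p \<in> U}"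
    using U by (rule openin_continuous_map_preimage)
  moreover have "openin ?P {p \<in> topspace ?P. fst p \<in> {-\<epsilon><..<\<epsilon>}}"
    by (rule openin_continuous_map_preimage[OF continuous_map_fst]) auto
  ultimately have "openin ?P ({p \<in> topspace ?P. fst p \<in> {-\<epsilon><..<\<epsilon>}} \<inter> {p \<in> topspace ?P. (\<lambda>(t, z). H t z) p \<in> U})"
    by (rule openin_Int[rotated])
  moreover have "{p \<in> topspace ?P. fst p \<in> {-\<epsilon><..<\<epsilon>}} \<inter> {p \<in> topspace ?P. (\<lambda>(t, z). H t z) p \<in> U}
      = {(t, w). \<bar>t\<bar> < \<epsilon> \<and> w \<in> U \<and> H t w \<in> U}"
    using openin_subset[OF U] by auto
  ultimately show ?thesis
    by simp
qed

lemma homeomorphic_maps_time_function: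
  assumes Ut: "U \<subseteq> topspace X"
    and \<tau>: "continuous_map (subtopology X U) euclideanreal \<tau>"
    and to_section: "\<And>z. z \<in> U \<Longrightarrow> \<tau> z \<in> I \<and> H (- \<tau> z) z \<in> U \<and> \<tau> (H (- \<tau> z) z) = 0"
    and from_section: "\<And>s y. s \<in> I \<Longrightarrow> y \<in> U \<Longrightarrow> \<tau> y = 0 \<Longrightarrow> H s y \<in> U \<and> \<tau> (H s y) = s"
  shows "homeomorphic_maps (subtopology X U)
    (prod_topology (subtopology euclideanreal I) (subtopology X {y \<in> U. \<tau> y = 0}))
    (\<lambda>z. (\<tau> z, H (- \<tau> z) z)) (\<lambda>(s, y). H s y)"
  unfolding homeomorphic_maps_def
proof (intro conjI ballI)
  let ?S = "{y \<in> U. \<tau> y = 0}"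
  have tsU: "topspace (subtopology X U) = U" and tsS: "topspace (subtopology X ?S) = ?S"
    using Ut by auto
  have "continuous_map (subtopology X U) (prod_topology euclideanreal X) (\<lambda>z. (- \<tau> z, z))"
    using \<tau> by (auto simp: continuous_map_pairwise o_def continuous_map_from_subtopology
        intro: continuous_map_minus)
  from continuous_map_compose[OF this continuous_flow]
  have "continuous_map (subtopology X U) X (\<lambda>z. H (- \<tau> z) z)"
    by (simp add: o_def)
  then show "continuous_map (subtopology X U) (prod_topology (subtopology euclideanreal I) (subtopology X ?S))
      (\<lambda>z. (\<tau> z, H (- \<tau> z) z))"
    unfolding continuous_map_pairwise continuous_map_in_subtopology
    using \<tau> to_section tsU by (auto simp: o_def)
  have "continuous_map (subtopology (prod_topology euclideanreal X) (I \<times> ?S)) X (\<lambda>(s, y). H s y)"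
    using continuous_flow by (rule continuous_map_from_subtopology)
  then show "continuous_map (prod_topology (subtopology euclideanreal I) (subtopology X ?S))
      (subtopology X U) (\<lambda>(s, y). H s y)"
    unfolding continuous_map_in_subtopology subtopology_Times
    using from_section tsS by auto
  fix z
  assume "z \<in> topspace (subtopology X U)"
  then have "z \<in> topspace X"
    using tsU Ut by auto
  then show "(\<lambda>(s, y). H s y) (\<tau> z, H (- \<tau> z) z) = z"
    by (simp add: flow_add flow_zero)
next
  fix q
  assume "q \<in> topspace (prod_topology (subtopology euclideanreal I) (subtopology X {y \<in> U. \<tau> y = 0}))"
  then obtain s y where q: "q = (s, y)" "s \<in> I" "y \<in> U" "\<tau> y = 0"
    using Ut by auto
  then have "y \<in> topspace X"
    using Ut by auto
  then show "(\<lambda>z. (\<tau> z, H (- \<tau> z) z)) ((\<lambda>(s, y). H s y) q) = q"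
    using from_section[of s y] q by (simp add: flow_add flow_zero)
qed

lemma flow_chart_from_time_function:
  assumes U: "openin X U" and I: "open I" "0 \<in> I" and "\<epsilon> > 0"
    and \<tau>: "continuous_map (subtopology X U) euclideanreal \<tau>"
    and to_section: "\<And>z. z \<in> U \<Longrightarrow> \<tau> z \<in> I \<and> H (- \<tau> z) z \<in> U \<and> \<tau> (H (- \<tau> z) z) = 0"
    and from_section: "\<And>s y. s \<in> I \<Longrightarrow> y \<in> U \<Longrightarrow> \<tau> y = 0 \<Longrightarrow> H s y \<in> U \<and> \<tau> (H s y) = s"
    and equivariant: "\<And>t w. \<bar>t\<bar> < \<epsilon> \<Longrightarrow> w \<in> U \<Longrightarrow> H t w \<in> U \<Longrightarrow> \<tau> (H t w) = t + \<tau> w"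
  shows "flow_chart X H U I (subtopology X {y \<in> U. \<tau> y = 0}) (\<lambda>z. (\<tau> z, H (- \<tau> z) z))"
  unfolding flow_chart_def
proof (intro conjI ballI exI)
  have Ut: "U \<subseteq> topspace X"
    using U openin_subset by blast
  show "homeomorphic_map (subtopology X U)
      (prod_topology (subtopology euclideanreal I) (subtopology X {y \<in> U. \<tau> y = 0}))
      (\<lambda>z. (\<tau> z, H (- \<tau> z) z))"
    using homeomorphic_maps_time_function[OF Ut \<tau> to_section from_section] homeomorphic_map_maps
    by blast
  fix z
  assume z: "z \<in> U"
  show "openin (prod_topology euclideanreal (subtopology X U)) {(t, w). \<bar>t\<bar> < \<epsilon> \<and> w \<in> U \<and> H t w \<in> U}"
    using U by (rule openin_flow_return_strip)
  show "(0, z) \<in> {(t, w). \<bar>t\<bar> < \<epsilon> \<and> w \<in> U \<and> H t w \<in> U}"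
    using z Ut \<open>\<epsilon> > 0\<close> flow_zero by auto
  show "\<forall>t w. (t, w) \<in> {(t, w). \<bar>t\<bar> < \<epsilon> \<and> w \<in> U \<and> H t w \<in> U} \<longrightarrow>
      H t w \<in> U \<and> (\<tau> (H t w), H (- \<tau> (H t w)) (H t w)) = (t + fst (\<tau> w, H (- \<tau> w) w), snd (\<tau> w, H (- \<tau> w) w))"
  proof (intro allI impI)
    fix t w
    assume "(t, w) \<in> {(t, w). \<bar>t\<bar> < \<epsilon> \<and> w \<in> U \<and> H t w \<in> U}"
    then have tw: "\<bar>t\<bar> < \<epsilon>" "w \<in> U" "H t w \<in> U"
      by auto
    then have "w \<in> topspace X"
      using Ut by blast
    then show "H t w \<in> U \<and> (\<tau> (H t w), H (- \<tau> (H t w)) (H t w)) = (t + fst (\<tau> w, H (- \<tau> w) w), snd (\<tau> w, H (- \<tau> w) w))"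
      using equivariant[OF tw] tw(3) by (simp add: flow_add)
  qed
qed (use U I in auto)

end

locale orbit_increasing = real_flow +
  fixes g :: "'a \<Rightarrow> real" and N :: "'a set" and \<delta> :: real
  assumes continuous_g: "continuous_map X euclideanreal g"
    and open_N: "openin X N" and \<delta>_pos: "\<delta> > 0"
    and increasing: "\<And>z. z \<in> N \<Longrightarrow> strict_mono_on {-\<delta><..<\<delta>} (\<lambda>s. g (H s z))"
begin

text \<open>Crossing times are sought in (-\<delta>/2, \<delta>/2), so that the difference of two of them
  stays in the window (-\<delta>, \<delta>) on which g increases along orbits.\<close>

definition crossing :: "real \<Rightarrow> 'a set" where
  "crossing c = {z \<in> N. g (H (- \<delta> / 2) z) < c \<and> c < g (H (\<delta> / 2) z)}"

definition hitting_time :: "real \<Rightarrow> 'a \<Rightarrow> real" where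
  "hitting_time c z = (THE s. \<bar>s\<bar> < \<delta> / 2 \<and> g (H s z) = c)"

lemma crossing_subset: "crossing c \<subseteq> N" and crossing_topspace: "crossing c \<subseteq> topspace X"
  using open_N openin_subset by (auto simp: crossing_def)

lemma openin_crossing: "openin X (crossing c)"
proof -
  have "crossing c = N \<inter> {z \<in> topspace X. g (H (- \<delta> / 2) z) \<in> {..<c}}
      \<inter> {z \<in> topspace X. g (H (\<delta> / 2) z) \<in> {c<..}}"
    using crossing_topspace by (auto simp: crossing_def)
  also have "openin X \<dots>"
    by (intro openin_Int open_N openin_continuous_map_preimage[OF continuous_map_flow_at[OF continuous_g]])
      auto
  finally show ?thesis .
qed

lemma orbit_less_iff:
  assumes "z \<in> crossing c" "\<bar>s\<bar> < \<delta>" "\<bar>s'\<bar> < \<delta>"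
  shows "g (H s z) < g (H s' z) \<longleftrightarrow> s < s'"
proof -
  have "z \<in> N"
    using assms(1) crossing_subset by blast
  then show ?thesis
    using strict_mono_on_less[OF increasing, of z s s'] assms(2,3) by (auto simp: abs_less_iff)
qed

lemma hitting_time:
  assumes z: "z \<in> crossing c"
  shows "\<bar>hitting_time c z\<bar> < \<delta> / 2" "g (H (hitting_time c z) z) = c"
proof -
  have zt: "z \<in> topspace X"
    using z crossing_topspace by blast
  obtain s where s: "- \<delta> / 2 \<le> s" "s \<le> \<delta> / 2" "g (H s z) = c"
    using IVT'[of "\<lambda>s. g (H s z)" "- \<delta> / 2" c "\<delta> / 2"] z \<delta>_pos
      continuous_on_subset[OF continuous_on_orbit[OF continuous_g zt]]
    by (auto simp: crossing_def)
  moreover have "s \<noteq> - \<delta> / 2" "s \<noteq> \<delta> / 2"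
    using z s(3) by (auto simp: crossing_def)
  ultimately have "\<bar>s\<bar> < \<delta> / 2"
    by linarith
  moreover have "s' = s" if "\<bar>s'\<bar> < \<delta> / 2" "g (H s' z) = c" for s'
    using orbit_less_iff[OF z, of s s'] orbit_less_iff[OF z, of s' s]
      that s \<open>\<bar>s\<bar> < \<delta> / 2\<close> by auto
  ultimately have "\<exists>!s. \<bar>s\<bar> < \<delta> / 2 \<and> g (H s z) = c"
    using s(3) by blast
  from theI'[OF this] show "\<bar>hitting_time c z\<bar> < \<delta> / 2" "g (H (hitting_time c z) z) = c"
    unfolding hitting_time_def by auto
qed

lemma hitting_time_eqI:
  assumes "z \<in> crossing c" "\<bar>s\<bar> < \<delta>" "g (H s z) = c"
  shows "hitting_time c z = s"
proof -
  have h: "\<bar>hitting_time c z\<bar> < \<delta>" "g (H (hitting_time c z) z) = c"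
    using hitting_time[OF assms(1)] \<delta>_pos by auto
  then show ?thesis
    using orbit_less_iff[OF assms(1,2) h(1)] orbit_less_iff[OF assms(1) h(1) assms(2)]
      assms(3) by auto
qed

lemma hitting_time_flow:
  assumes "z \<in> crossing c" "H t z \<in> crossing c" "\<bar>hitting_time c z - t\<bar> < \<delta>"
  shows "hitting_time c (H t z) = hitting_time c z - t"
proof -
  have "z \<in> topspace X"
    using assms(1) crossing_topspace by blast
  then show ?thesis
    using assms hitting_time(2)[OF assms(1)] by (intro hitting_time_eqI) (auto simp: flow_add)
qed

lemma continuous_map_hitting_time:
  "continuous_map (subtopology X (crossing c)) euclideanreal (hitting_time c)"
  unfolding continuous_map_real_iff
proof (intro ballI allI impI)
  fix z0 and e :: real
  assume "z0 \<in> topspace (subtopology X (crossing c))" and e: "e > 0"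
  then have z0: "z0 \<in> crossing c"
    by simp
  define h where "h = hitting_time c z0"
  define e' where "e' = min e (\<delta> / 2)"
  have e': "e' > 0" "e' \<le> e" "e' \<le> \<delta> / 2"
    using e \<delta>_pos by (auto simp: e'_def)
  have h: "\<bar>h\<bar> < \<delta> / 2" "g (H h z0) = c"
    using hitting_time[OF z0] by (auto simp: h_def)
  define V where "V = crossing c \<inter> {z \<in> topspace X. g (H (h - e') z) \<in> {..<c}}
      \<inter> {z \<in> topspace X. g (H (h + e') z) \<in> {c<..}}"
  have "openin X V"
    unfolding V_def
    by (intro openin_Int openin_crossing
        openin_continuous_map_preimage[OF continuous_map_flow_at[OF continuous_g]]) auto
  moreover have "z0 \<in> V"
    using z0 crossing_topspace h e' orbit_less_iff[OF z0, of "h - e'" h]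
      orbit_less_iff[OF z0, of h "h + e'"] by (auto simp: V_def)
  moreover have "\<bar>hitting_time c z - h\<bar> < e" if z: "z \<in> V" for z
  proof -
    have zc: "z \<in> crossing c"
      using z by (simp add: V_def)
    note hz = hitting_time[OF zc]
    have "h - e' < hitting_time c z" "hitting_time c z < h + e'"
      using z h(1) hz e' orbit_less_iff[OF zc, of "h - e'" "hitting_time c z"]
        orbit_less_iff[OF zc, of "hitting_time c z" "h + e'"] by (auto simp: V_def)
    then show ?thesis
      using e' by linarith
  qed
  ultimately show "\<exists>V. openin (subtopology X (crossing c)) V \<and> z0 \<in> V \<and>
      (\<forall>z\<in>V. \<bar>hitting_time c z - hitting_time c z0\<bar> < e)"
    unfolding h_def by (intro exI[of _ V]) (auto simp: openin_open_subtopology[OF openin_crossing] V_def)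
qed

definition flow_box_domain :: "real \<Rightarrow> real \<Rightarrow> 'a set \<Rightarrow> 'a set" where
  "flow_box_domain c \<epsilon> N' =
     {z \<in> crossing c. \<bar>hitting_time c z\<bar> < \<epsilon> \<and> H (hitting_time c z) z \<in> crossing c \<inter> N'}"

lemma openin_flow_box_domain:
  assumes "openin X N'"
  shows "openin X (flow_box_domain c \<epsilon> N')"
proof -
  let ?C = "subtopology X (crossing c)"
  have "continuous_map ?C X (\<lambda>z. H (hitting_time c z) z)"
    using continuous_map_compose[OF _ continuous_flow, of _ "\<lambda>z. (hitting_time c z, z)"]
      continuous_map_hitting_time
    by (auto simp: continuous_map_pairwise o_def continuous_map_from_subtopology)
  then have "openin ?C {z \<in> topspace ?C. H (hitting_time c z) z \<in> crossing c \<inter> N'}"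
    using openin_Int[OF openin_crossing assms] by (rule openin_continuous_map_preimage)
  moreover have "openin ?C {z \<in> topspace ?C. hitting_time c z \<in> {-\<epsilon><..<\<epsilon>}}"
    using continuous_map_hitting_time by (rule openin_continuous_map_preimage) auto
  ultimately have "openin ?C ({z \<in> topspace ?C. hitting_time c z \<in> {-\<epsilon><..<\<epsilon>}}
      \<inter> {z \<in> topspace ?C. H (hitting_time c z) z \<in> crossing c \<inter> N'})"
    by (rule openin_Int[rotated])
  moreover have "{z \<in> topspace ?C. hitting_time c z \<in> {-\<epsilon><..<\<epsilon>}}
      \<inter> {z \<in> topspace ?C. H (hitting_time c z) z \<in> crossing c \<inter> N'} = flow_box_domain c \<epsilon> N'"
    using crossing_topspace by (auto simp: flow_box_domain_def)
  ultimately have "openin ?C (flow_box_domain c \<epsilon> N')"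
    by simp
  then show ?thesis
    using openin_crossing by (rule openin_trans_full)
qed

lemma flow_chart_flow_box_domain:
  assumes N': "openin X N'" and \<epsilon>: "0 < \<epsilon>" "\<epsilon> \<le> \<delta> / 2"
    and near: "\<And>s y. \<bar>s\<bar> < \<epsilon> \<Longrightarrow> y \<in> N' \<Longrightarrow> H s y \<in> crossing c"
  shows "flow_chart X H (flow_box_domain c \<epsilon> N') {-\<epsilon><..<\<epsilon>}
      (subtopology X {y \<in> flow_box_domain c \<epsilon> N'. hitting_time c y = 0})
      (\<lambda>z. (- hitting_time c z, H (hitting_time c z) z))"
proof -
  let ?D = "flow_box_domain c \<epsilon> N'"
  have D_crossing: "?D \<subseteq> crossing c"
    by (auto simp: flow_box_domain_def)
  have "flow_chart X H ?D {-\<epsilon><..<\<epsilon>} (subtopology X {y \<in> ?D. - hitting_time c y = 0})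
      (\<lambda>z. (- hitting_time c z, H (- (- hitting_time c z)) z))"
  proof (rule flow_chart_from_time_function[where \<epsilon> = "\<delta> / 2"])
    show "openin X ?D"
      using N' by (rule openin_flow_box_domain)
    show "open {-\<epsilon><..<\<epsilon>}" "0 \<in> {-\<epsilon><..<\<epsilon>}" "\<delta> / 2 > 0"
      using \<epsilon> by auto
    show "continuous_map (subtopology X ?D) euclideanreal (\<lambda>z. - hitting_time c z)"
      using continuous_map_from_subtopology_mono[OF continuous_map_hitting_time D_crossing]
      by (rule continuous_map_minus)
  next
    fix z
    assume "z \<in> ?D"
    then have z: "z \<in> crossing c" "\<bar>hitting_time c z\<bar> < \<epsilon>"
      and \<pi>z: "H (hitting_time c z) z \<in> crossing c \<inter> N'"
      by (auto simp: flow_box_domain_def)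
    moreover have "hitting_time c (H (hitting_time c z) z) = 0"
      using hitting_time_flow[of z c "hitting_time c z"] z \<pi>z \<delta>_pos by simp
    moreover have "H (hitting_time c z) z \<in> topspace X"
      using \<pi>z crossing_topspace by blast
    ultimately show "- hitting_time c z \<in> {-\<epsilon><..<\<epsilon>} \<and> H (- (- hitting_time c z)) z \<in> ?D \<and>
        - hitting_time c (H (- (- hitting_time c z)) z) = 0"
      using \<epsilon> by (auto simp: flow_box_domain_def flow_zero)
  next
    fix s y
    assume s: "s \<in> {-\<epsilon><..<\<epsilon>}" and y: "y \<in> ?D" "- hitting_time c y = 0"
    then have yC: "y \<in> crossing c" and yt: "y \<in> topspace X"
      using D_crossing crossing_topspace by auto
    then have "y \<in> N'"
      using y by (auto simp: flow_box_domain_def flow_zero)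
    then have sy: "H s y \<in> crossing c"
      using near s by auto
    then have "hitting_time c (H s y) = - s"
      using hitting_time_flow[OF yC sy] y(2) s \<epsilon> by (simp add: abs_less_iff)
    then show "H s y \<in> ?D \<and> - hitting_time c (H s y) = s"
      using sy s \<epsilon> yC \<open>y \<in> N'\<close>
      by (simp add: flow_box_domain_def flow_add[OF yt] flow_zero[OF yt] abs_less_iff)
  next
    fix t w
    assume t: "\<bar>t\<bar> < \<delta> / 2" and "w \<in> ?D" "H t w \<in> ?D"
    then have w: "w \<in> crossing c" "H t w \<in> crossing c"
      using D_crossing by auto
    moreover have "\<bar>hitting_time c w - t\<bar> < \<delta>"
      using hitting_time(1)[OF w(1)] t by linarith
    ultimately show "- hitting_time c (H t w) = t + - hitting_time c w"
      using hitting_time_flow by simp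
  qed
  then show ?thesis
    by simp
qed

lemma flow_chart_at:
  assumes x: "x \<in> N"
  shows "\<exists>U I (T :: 'a topology) \<phi> \<tau>\<^sub>0. x \<in> U \<and> flow_chart X H U I T \<phi> \<and> \<phi> x = (0, \<tau>\<^sub>0)"
proof -
  have xt: "x \<in> topspace X"
    using x open_N openin_subset by blast
  have "g (H (- \<delta> / 2) x) < g (H 0 x)" "g (H 0 x) < g (H (\<delta> / 2) x)"
    using strict_mono_onD[OF increasing[OF x]] \<delta>_pos by auto
  then have xC: "x \<in> crossing (g x)"
    using x by (simp add: crossing_def flow_zero[OF xt])
  have hx: "hitting_time (g x) x = 0"
    using hitting_time_eqI[OF xC, of 0] \<delta>_pos by (simp add: flow_zero[OF xt])
  let ?R = "{p \<in> topspace (prod_topology euclideanreal X). (\<lambda>(t, z). H t z) p \<in> crossing (g x)}"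
  have "openin (prod_topology euclideanreal X) ?R"
    by (rule openin_continuous_map_preimage[OF continuous_flow openin_crossing])
  moreover have "(0, x) \<in> ?R"
    using xC xt by (simp add: flow_zero)
  ultimately obtain \<epsilon>0 N' where \<epsilon>0: "\<epsilon>0 > 0" "openin X N'" "x \<in> N'"
    and R: "\<And>s y. \<bar>s\<bar> < \<epsilon>0 \<Longrightarrow> y \<in> N' \<Longrightarrow> (s, y) \<in> ?R"
    by (rule openin_prod_real_box_zero) blast
  define \<epsilon> where "\<epsilon> = min \<epsilon>0 (\<delta> / 2)"
  have \<epsilon>: "0 < \<epsilon>" "\<epsilon> \<le> \<delta> / 2"
    using \<epsilon>0 \<delta>_pos by (auto simp: \<epsilon>_def)
  have "\<And>s y. \<bar>s\<bar> < \<epsilon> \<Longrightarrow> y \<in> N' \<Longrightarrow> H s y \<in> crossing (g x)"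
    using R by (auto simp: \<epsilon>_def)
  from flow_chart_flow_box_domain[OF \<epsilon>0(2) \<epsilon> this]
  have "flow_chart X H (flow_box_domain (g x) \<epsilon> N') {-\<epsilon><..<\<epsilon>}
      (subtopology X {y \<in> flow_box_domain (g x) \<epsilon> N'. hitting_time (g x) y = 0})
      (\<lambda>z. (- hitting_time (g x) z, H (hitting_time (g x) z) z))" .
  moreover have "x \<in> flow_box_domain (g x) \<epsilon> N'"
    using xC hx \<epsilon> \<epsilon>0(3) by (simp add: flow_box_domain_def flow_zero[OF xt])
  moreover have "(\<lambda>z. (- hitting_time (g x) z, H (hitting_time (g x) z) z)) x = (0, x)"
    using hx by (simp add: flow_zero[OF xt])
  ultimately show ?thesis
    by blast
qed

end

lemma flow_chartD:
  assumes "flow_chart X H U I T \<phi>"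
  shows "openin X U" "open I"
    and "homeomorphic_map (subtopology X U) (prod_topology (subtopology euclideanreal I) T) \<phi>"
    and "z \<in> U \<Longrightarrow> \<exists>W. openin (prod_topology euclideanreal (subtopology X U)) W \<and> (0, z) \<in> W \<and>
        (\<forall>t w. (t, w) \<in> W \<longrightarrow> H t w \<in> U \<and> \<phi> (H t w) = (t + fst (\<phi> w), snd (\<phi> w)))"
  using assms by (simp_all add: flow_chart_def)

lemma flow_chart_translation:
  assumes "flow_chart X H U I T \<phi>" "w \<in> U"
  obtains \<rho> where "\<rho> > 0"
    "\<And>t. \<bar>t\<bar> < \<rho> \<Longrightarrow> H t w \<in> U \<and> \<phi> (H t w) = (t + fst (\<phi> w), snd (\<phi> w))"
proof -
  obtain W where W: "openin (prod_topology euclideanreal (subtopology X U)) W" "(0, w) \<in> W"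
    and translation: "\<And>t w. (t, w) \<in> W \<Longrightarrow> H t w \<in> U \<and> \<phi> (H t w) = (t + fst (\<phi> w), snd (\<phi> w))"
    using flow_chartD(4)[OF assms] by (elim exE conjE) blast
  obtain \<rho> V where "\<rho> > 0" "openin (subtopology X U) V" "w \<in> V"
    and "\<And>t v. \<bar>t\<bar> < \<rho> \<Longrightarrow> v \<in> V \<Longrightarrow> (t, v) \<in> W"
    by (rule openin_prod_real_box_zero[OF W(1,2)]) blast
  then show ?thesis
    using translation by (intro that[of \<rho>]) auto
qed

lemma flow_chart_inverse:
  assumes "flow_chart X H U I T \<phi>"
    and "homeomorphic_maps (subtopology X U) (prod_topology (subtopology euclideanreal I) T) \<phi> \<psi>"
  shows "\<And>z. z \<in> U \<Longrightarrow> \<phi> z \<in> I \<times> topspace T \<and> \<psi> (\<phi> z) = z"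
    and "\<And>q. q \<in> I \<times> topspace T \<Longrightarrow> \<psi> q \<in> U \<and> \<phi> (\<psi> q) = q"
    and "continuous_map (prod_topology (subtopology euclideanreal I) T) X \<psi>"
proof -
  have "topspace (subtopology X U) = U"
    using flow_chartD(1)[OF assms(1)] openin_subset by auto
  with assms(2) show "\<And>z. z \<in> U \<Longrightarrow> \<phi> z \<in> I \<times> topspace T \<and> \<psi> (\<phi> z) = z"
    and "\<And>q. q \<in> I \<times> topspace T \<Longrightarrow> \<psi> q \<in> U \<and> \<phi> (\<psi> q) = q"
    and "continuous_map (prod_topology (subtopology euclideanreal I) T) X \<psi>"
    unfolding homeomorphic_maps_def continuous_map_in_subtopology by (auto simp: continuous_map_def)
qed

lemma flow_chart_box:
  assumes c: "flow_chart X H U I T \<phi>"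
    and \<psi>: "homeomorphic_maps (subtopology X U) (prod_topology (subtopology euclideanreal I) T) \<phi> \<psi>"
    and Q: "openin X Q" and p: "p \<in> U \<inter> Q" "\<phi> p = (s0, \<tau>0)"
  obtains r S where "r > 0" "openin T S" "\<tau>0 \<in> S" "ball s0 r \<subseteq> I"
    "\<And>u \<tau>. u \<in> ball s0 r \<Longrightarrow> \<tau> \<in> S \<Longrightarrow> \<psi> (u, \<tau>) \<in> Q"
    "openin X {z \<in> U. \<phi> z \<in> ball s0 r \<times> S}" "{z \<in> U. \<phi> z \<in> ball s0 r \<times> S} \<subseteq> Q"
    "snd ` \<phi> ` {z \<in> U. \<phi> z \<in> ball s0 r \<times> S} = S"
proof -
  note \<psi>\<phi> = flow_chart_inverse(1)[OF c \<psi>] and \<phi>\<psi> = flow_chart_inverse(2)[OF c \<psi>]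
  let ?P = "prod_topology (subtopology euclideanreal I) T"
  have "openin ?P {q \<in> topspace ?P. \<psi> q \<in> Q}"
    using flow_chart_inverse(3)[OF c \<psi>] Q by (rule openin_continuous_map_preimage)
  moreover have "(s0, \<tau>0) \<in> {q \<in> topspace ?P. \<psi> q \<in> Q}"
    using \<psi>\<phi>[of p] p by auto
  ultimately obtain r S where r: "r > 0" and S: "openin T S" "\<tau>0 \<in> S"
    and box: "\<And>u \<tau>. \<bar>u - s0\<bar> < r \<Longrightarrow> \<tau> \<in> S \<Longrightarrow> (u, \<tau>) \<in> {q \<in> topspace ?P. \<psi> q \<in> Q}"
    by (rule openin_prod_real_box[OF _ flow_chartD(2)[OF c]]) blast
  have J: "ball s0 r \<subseteq> I" and in_Q: "\<And>u \<tau>. u \<in> ball s0 r \<Longrightarrow> \<tau> \<in> S \<Longrightarrow> \<psi> (u, \<tau>) \<in> Q"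
    using box[OF _ S(2)] box by (auto simp: dist_real_def abs_minus_commute)
  let ?V = "{z \<in> U. \<phi> z \<in> ball s0 r \<times> S}"
  have "openin (subtopology euclideanreal I) (ball s0 r)"
    using flow_chartD(2)[OF c] open_ball J by (rule open_openin_trans)
  then have "openin (subtopology X U) {z \<in> topspace (subtopology X U). \<phi> z \<in> ball s0 r \<times> S}"
    using S(1) homeomorphic_imp_continuous_map[OF flow_chartD(3)[OF c]]
    by (intro openin_continuous_map_preimage) (auto simp: openin_prod_Times_iff)
  moreover have "{z \<in> topspace (subtopology X U). \<phi> z \<in> ball s0 r \<times> S} = ?V"
    using openin_subset[OF flow_chartD(1)[OF c]] by auto
  ultimately have V_open: "openin X ?V"
    using flow_chartD(1)[OF c] openin_trans_full by metis
  have V_sub: "?V \<subseteq> Q"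
  proof
    fix z
    assume "z \<in> ?V"
    then obtain u \<tau> where "z \<in> U" "\<phi> z = (u, \<tau>)" "u \<in> ball s0 r" "\<tau> \<in> S"
      by auto
    then show "z \<in> Q"
      using \<psi>\<phi>[of z] in_Q[of u \<tau>] by auto
  qed
  have V_img: "snd ` \<phi> ` ?V = S"
  proof
    show "S \<subseteq> snd ` \<phi> ` ?V"
    proof
      fix \<tau>
      assume \<tau>: "\<tau> \<in> S"
      then have "\<psi> (s0, \<tau>) \<in> ?V" "\<phi> (\<psi> (s0, \<tau>)) = (s0, \<tau>)"
        using \<phi>\<psi>[of "(s0, \<tau>)"] openin_subset[OF S(1)] J r by (auto simp: subset_iff)
      then have "(s0, \<tau>) \<in> \<phi> ` ?V"
        by (intro rev_image_eqI[of "\<psi> (s0, \<tau>)"]) auto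
      then show "\<tau> \<in> snd ` \<phi> ` ?V"
        by (intro rev_image_eqI[of "(s0, \<tau>)"]) auto
    qed
  qed auto
  show ?thesis
    by (rule that[OF r S J in_Q V_open V_sub V_img])
qed

context real_flow
begin

lemma flow_chart_line:
  assumes chart: "flow_chart X H U I T \<phi>" and z: "z \<in> U" "\<phi> z = (s, \<tau>)"
    and J: "connected J" "J \<subseteq> I" "s \<in> J" "v \<in> J"
  shows "H (v - s) z \<in> U \<and> \<phi> (H (v - s) z) = (v, \<tau>)"
proof -
  obtain \<psi> where \<psi>: "homeomorphic_maps (subtopology X U) (prod_topology (subtopology euclideanreal I) T) \<phi> \<psi>"
    using flow_chartD(3)[OF chart] homeomorphic_map_maps by blast
  note \<psi>\<phi> = flow_chart_inverse(1)[OF chart \<psi>] and \<phi>\<psi> = flow_chart_inverse(2)[OF chart \<psi>]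
  have Ut: "U \<subseteq> topspace X"
    using flow_chartD(1)[OF chart] openin_subset by blast
  have \<tau>: "\<tau> \<in> topspace T"
    using \<psi>\<phi>[OF z(1)] z(2) by simp
  have line: "\<psi> (u, \<tau>) \<in> U \<and> \<phi> (\<psi> (u, \<tau>)) = (u, \<tau>)" if "u \<in> J" for u
    using \<phi>\<psi>[of "(u, \<tau>)"] that J(2) \<tau> by auto
  define f where "f u = H (s - u) (\<psi> (u, \<tau>))" for u
  \<comment> \<open>the chart line through z is the orbit of z: f is locally constant on J\<close>
  have "f s = f v"
  proof (rule connected_local_const[OF J(1,3,4)], rule ballI)
    fix a
    assume a: "a \<in> J"
    define w where "w = \<psi> (a, \<tau>)"
    have w: "w \<in> U" "\<phi> w = (a, \<tau>)"
      using line[OF a] by (auto simp: w_def)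
    obtain \<rho> where \<rho>: "\<rho> > 0"
      "\<And>t. \<bar>t\<bar> < \<rho> \<Longrightarrow> H t w \<in> U \<and> \<phi> (H t w) = (t + fst (\<phi> w), snd (\<phi> w))"
      using flow_chart_translation[OF chart w(1)] by blast
    show "\<forall>\<^sub>F b in at a within J. f a = f b"
      unfolding eventually_at
    proof (intro exI conjI ballI impI)
      fix b
      assume "b \<in> J" "b \<noteq> a \<and> dist b a < \<rho>"
      then have "H (b - a) w \<in> U" "\<phi> (H (b - a) w) = (b, \<tau>)"
        using \<rho>(2)[of "b - a"] w(2) by (auto simp: dist_real_def)
      then have "\<psi> (b, \<tau>) = H (b - a) w"
        using \<psi>\<phi> by metis
      then show "f a = f b"
        using w(1) Ut by (auto simp: f_def w_def flow_add)
    qed (rule \<rho>(1))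
  qed
  moreover have "f s = z"
    using \<psi>\<phi>[OF z(1)] z Ut by (auto simp: f_def flow_zero)
  moreover have "\<psi> (v, \<tau>) = H (v - s) (f v)"
    using line[OF J(4)] Ut by (auto simp: f_def flow_add flow_zero)
  ultimately have "\<psi> (v, \<tau>) = H (v - s) z"
    by simp
  then show ?thesis
    using line[OF J(4)] by simp
qed

lemma flow_chart_orbit:
  assumes chart: "flow_chart X H U I T \<phi>" and z: "z \<in> topspace X"
    and J: "connected J" "\<And>u. u \<in> J \<Longrightarrow> H (u - s) z \<in> U" "u \<in> J" "v \<in> J"
  shows "\<phi> (H (v - s) z) = (v - u + fst (\<phi> (H (u - s) z)), snd (\<phi> (H (u - s) z)))"
proof -
  define f where "f u = (fst (\<phi> (H (u - s) z)) - u, snd (\<phi> (H (u - s) z)))" for u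
  have "f u = f v"
  proof (rule connected_local_const[OF J(1,3,4)], rule ballI)
    fix a
    assume a: "a \<in> J"
    obtain \<rho> where \<rho>: "\<rho> > 0" "\<And>t. \<bar>t\<bar> < \<rho> \<Longrightarrow> H t (H (a - s) z) \<in> U \<and>
        \<phi> (H t (H (a - s) z)) = (t + fst (\<phi> (H (a - s) z)), snd (\<phi> (H (a - s) z)))"
      using flow_chart_translation[OF chart J(2)[OF a]] by blast
    show "\<forall>\<^sub>F b in at a within J. f a = f b"
      unfolding eventually_at
    proof (intro exI conjI ballI impI)
      fix b
      assume "b \<in> J" "b \<noteq> a \<and> dist b a < \<rho>"
      then show "f a = f b"
        using \<rho>(2)[of "b - a"] by (auto simp: f_def dist_real_def flow_add[OF z])
    qed (rule \<rho>(1))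
  qed
  then show ?thesis
    by (auto simp: f_def prod_eq_iff)
qed

lemma flow_chart_change:
  assumes c1: "flow_chart X H U1 I1 T1 \<phi>1" and c2: "flow_chart X H U2 I2 T2 \<phi>2"
    and p: "p \<in> U1 \<inter> U2"
  shows "\<exists>V sf tf. openin X V \<and> p \<in> V \<and> V \<subseteq> U1 \<inter> U2 \<and>
      continuous_map (subtopology T1 (snd ` \<phi>1 ` V)) euclideanreal sf \<and>
      continuous_map (subtopology T1 (snd ` \<phi>1 ` V)) T2 tf \<and>
      (\<forall>z\<in>V. \<phi>2 z = (fst (\<phi>1 z) + sf (snd (\<phi>1 z)), tf (snd (\<phi>1 z))))"
proof -
  obtain \<psi>1 where \<psi>1: "homeomorphic_maps (subtopology X U1) (prod_topology (subtopology euclideanreal I1) T1) \<phi>1 \<psi>1"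
    using flow_chartD(3)[OF c1] homeomorphic_map_maps by blast
  obtain s0 \<tau>0 where p1: "\<phi>1 p = (s0, \<tau>0)"
    by (cases "\<phi>1 p")
  obtain r S where r: "r > 0" and S: "openin T1 S" "\<tau>0 \<in> S" and J: "ball s0 r \<subseteq> I1"
    and in_U2: "\<And>u \<tau>. u \<in> ball s0 r \<Longrightarrow> \<tau> \<in> S \<Longrightarrow> \<psi>1 (u, \<tau>) \<in> U2"
    and V: "openin X {z \<in> U1. \<phi>1 z \<in> ball s0 r \<times> S}" "{z \<in> U1. \<phi>1 z \<in> ball s0 r \<times> S} \<subseteq> U2"
      "snd ` \<phi>1 ` {z \<in> U1. \<phi>1 z \<in> ball s0 r \<times> S} = S"
    by (rule flow_chart_box[OF c1 \<psi>1 flow_chartD(1)[OF c2] p p1]) blast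
  define sf where "sf \<tau> = fst (\<phi>2 (\<psi>1 (s0, \<tau>))) - s0" for \<tau>
  define tf where "tf \<tau> = snd (\<phi>2 (\<psi>1 (s0, \<tau>)))" for \<tau>
  have "s0 \<in> I1"
    using J r by (auto simp: subset_iff)
  then have "continuous_map (subtopology T1 S) (prod_topology (subtopology euclideanreal I1) T1) (\<lambda>\<tau>. (s0, \<tau>))"
    by (auto simp: continuous_map_pairwise o_def continuous_map_from_subtopology)
  from continuous_map_compose[OF this flow_chart_inverse(3)[OF c1 \<psi>1]]
  have "continuous_map (subtopology T1 S) (subtopology X U2) (\<lambda>\<tau>. \<psi>1 (s0, \<tau>))"
    using in_U2 r by (auto simp: continuous_map_in_subtopology o_def)
  from continuous_map_compose[OF this homeomorphic_imp_continuous_map[OF flow_chartD(3)[OF c2]]]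
  have "continuous_map (subtopology T1 S) (prod_topology (subtopology euclideanreal I2) T2)
      (\<lambda>\<tau>. \<phi>2 (\<psi>1 (s0, \<tau>)))"
    by (simp add: o_def)
  then have sf_cont: "continuous_map (subtopology T1 S) euclideanreal sf"
    and tf_cont: "continuous_map (subtopology T1 S) T2 tf"
    unfolding sf_def tf_def continuous_map_pairwise continuous_map_in_subtopology
    by (auto simp: o_def intro: continuous_map_diff)
  have "\<phi>2 z = (fst (\<phi>1 z) + sf (snd (\<phi>1 z)), tf (snd (\<phi>1 z)))"
    if z: "z \<in> U1" "\<phi>1 z = (s, \<tau>)" "s \<in> ball s0 r" "\<tau> \<in> S" for z s \<tau>
  proof -
    have zt: "z \<in> topspace X"
      using z(1) openin_subset[OF flow_chartD(1)[OF c1]] by blast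
    have line: "H (u - s) z = \<psi>1 (u, \<tau>)" if "u \<in> ball s0 r" for u
      using flow_chart_line[OF c1 z(1,2) _ J z(3) that] flow_chart_inverse(1)[OF c1 \<psi>1, of "H (u - s) z"]
      by auto
    \<comment> \<open>the orbit of z runs along the line of the first chart, inside U2\<close>
    have "\<phi>2 (H (s - s) z) = (s - s0 + fst (\<phi>2 (H (s0 - s) z)), snd (\<phi>2 (H (s0 - s) z)))"
    proof (rule flow_chart_orbit[OF c2 zt])
      show "H (u - s) z \<in> U2" if "u \<in> ball s0 r" for u
        using line[OF that] in_U2[OF that z(4)] by simp
    qed (use z(3) r in auto)
    then show ?thesis
      using line[of s0] z(2) r by (simp add: sf_def tf_def flow_zero[OF zt])
  qed
  then show ?thesis
    using V S(2) r p p1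
    by (intro exI[of _ "{z \<in> U1. \<phi>1 z \<in> ball s0 r \<times> S}"] exI[of _ sf] exI[of _ tf])
      (auto simp: sf_cont tf_cont)
qed

end

theorem lemma5p1:
  fixes X :: "'a topology" and H :: "real \<Rightarrow> 'a \<Rightarrow> 'a"
  assumes "completely_Hausdorff X"
    and "continuous_real_action X H"
    and "locally_free X H"
  shows "(\<forall>x\<in>topspace X. \<exists>U I (T :: 'a topology) \<phi> \<tau>\<^sub>0.
            x \<in> U \<and> flow_chart X H U I T \<phi> \<and> \<phi> x = (0, \<tau>\<^sub>0))
       \<and> (\<forall>U\<^sub>1 I\<^sub>1 (T\<^sub>1 :: 'b topology) \<phi>\<^sub>1 U\<^sub>2 I\<^sub>2 (T\<^sub>2 :: 'c topology) \<phi>\<^sub>2.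
            flow_chart X H U\<^sub>1 I\<^sub>1 T\<^sub>1 \<phi>\<^sub>1 \<and> flow_chart X H U\<^sub>2 I\<^sub>2 T\<^sub>2 \<phi>\<^sub>2 \<longrightarrow>
            (\<forall>p\<in>U\<^sub>1 \<inter> U\<^sub>2. \<exists>V sf tf.
               openin X V \<and> p \<in> V \<and> V \<subseteq> U\<^sub>1 \<inter> U\<^sub>2 \<and>
               continuous_map (subtopology T\<^sub>1 (snd ` \<phi>\<^sub>1 ` V)) euclideanreal sf \<and>
               continuous_map (subtopology T\<^sub>1 (snd ` \<phi>\<^sub>1 ` V)) T\<^sub>2 tf \<and>
               (\<forall>z\<in>V. \<phi>\<^sub>2 z = (fst (\<phi>\<^sub>1 z) + sf (snd (\<phi>\<^sub>1 z)), tf (snd (\<phi>\<^sub>1 z))))))"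
proof -
  interpret real_flow X H
    by unfold_locales (fact assms(2))
  show ?thesis
  proof (intro conjI ballI allI impI)
    fix x
    assume "x \<in> topspace X"
    then obtain g N \<delta> where "continuous_map X euclideanreal g" "openin X N" "x \<in> N" "\<delta> > 0"
      "\<And>z. z \<in> N \<Longrightarrow> strict_mono_on {-\<delta><..<\<delta>} (\<lambda>s. g (H s z))"
      using orbit_increasing_function assms(1,3) by metis
    then interpret orbit_increasing X H g N \<delta>
      by unfold_locales
    show "\<exists>U I (T :: 'a topology) \<phi> \<tau>\<^sub>0. x \<in> U \<and> flow_chart X H U I T \<phi> \<and> \<phi> x = (0, \<tau>\<^sub>0)"
      using \<open>x \<in> N\<close> by (rule flow_chart_at)
  next
    fix U\<^sub>1 I\<^sub>1 and T\<^sub>1 :: "'b topology" and \<phi>\<^sub>1 U\<^sub>2 I\<^sub>2 and T\<^sub>2 :: "'c topology" and \<phi>\<^sub>2 p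
    assume charts: "flow_chart X H U\<^sub>1 I\<^sub>1 T\<^sub>1 \<phi>\<^sub>1 \<and> flow_chart X H U\<^sub>2 I\<^sub>2 T\<^sub>2 \<phi>\<^sub>2"
      and "p \<in> U\<^sub>1 \<inter> U\<^sub>2"
    then show "\<exists>V sf tf. openin X V \<and> p \<in> V \<and> V \<subseteq> U\<^sub>1 \<inter> U\<^sub>2 \<and>
        continuous_map (subtopology T\<^sub>1 (snd ` \<phi>\<^sub>1 ` V)) euclideanreal sf \<and>
        continuous_map (subtopology T\<^sub>1 (snd ` \<phi>\<^sub>1 ` V)) T\<^sub>2 tf \<and>
        (\<forall>z\<in>V. \<phi>\<^sub>2 z = (fst (\<phi>\<^sub>1 z) + sf (snd (\<phi>\<^sub>1 z)), tf (snd (\<phi>\<^sub>1 z))))"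
      using flow_chart_change[OF conjunct1[OF charts] conjunct2[OF charts]] by blast
  qed
qed

end
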